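(* Let $\gamma\sim\mathcal{FB}(\bar\gamma;\kappa,\mu,m,\eta,\varrho)$ be a Fluctuating Beckmann random variable (as defined in the context). Then for every real $s\le 0$ its moment generating function $M_\gamma(s)=\mathbb{E}[e^{s\gamma}]$ is $$ M_\gamma(s)=\frac{1}{\left(1-\frac{2\eta\,\bar\gamma s}{\mu(1+\eta)(1+\kappa)}\right)^{\mu/2}\left(1-\frac{2\,\bar\gamma s}{\mu(1+\eta)(1+\kappa)}\right)^{\mu/2}} \left[1-\frac{1}{m}\left(\frac{\mu\kappa\frac{\varrho^2}{1+\varrho^2}(1+\eta)\bar\gamma s}{(1+\eta)(1+\kappa)\mu-2\eta\bar\gamma s}+\frac{\mu\kappa\frac{1}{1+\varrho^2}(1+\eta)\bar\gamma s}{(1+\eta)(1+\kappa)\mu-2\bar\gamma s}\right)\right]^{-m}. $$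
   Context: Fluctuating Beckmann (FB) model. Let $\mu$ be a positive integer, $\sigma_x,\sigma_y>0$, $m>0$, $\bar\gamma>0$, and let $p_1,\dots,p_\mu,q_1,\dots,q_\mu$ be real numbers with $p^2:=\sum_{i=1}^\mu p_i^2$, $q^2:=\sum_{i=1}^\mu q_i^2$, and $q^2>0$. Let $X_1,\dots,X_\mu,Y_1,\dots,Y_\mu,\xi$ be mutually independent random variables with $X_i\sim\mathcal N(0,\sigma_x^2)$, $Y_i\sim\mathcal N(0,\sigma_y^2)$, and $\xi\ge 0$ Nakagami-$m$ distributed with $\mathbb E[\xi^2]=1$, i.e. $\xi^2$ is Gamma distributed with shape $m$ and scale $1/m$ (density of $\xi$: $f_\xi(x)=\frac{2m^m}{\Gamma(m)}x^{2m-1}e^{-mx^2}$, $x>0$). Set $W=\sum_{i=1}^\mu\big[(X_i+p_i\xi)^2+(Y_i+q_i\xi)^2\big]$ and $\gamma=\bar\gamma\,W/\mathbb E[W]$ (so $\mathbb E[\gamma]=\bar\gamma$). The parameters are $\kappa=\frac{p^2+q^2}{\mu(\sigma_x^2+\sigma_y^2)}$, $\varrho^2=p^2/q^2$ (with $\varrho\ge0$), $\eta=\sigma_x^2/\sigma_y^2$. We then write $\gamma\sim\mathcal{FB}(\bar\gamma;\kappa,\mu,m,\eta,\varrho)$. *)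

theory Defs
  imports "HOL-Probability.Probability"
begin

text \<open>Nakagami-m density with E[xi^2] = 1 (shape m, spread 1).\<close>
definition nakagami_density :: "real \<Rightarrow> real \<Rightarrow> real" where
  "nakagami_density m x =
     (if x > 0 then 2 * m powr m / Gamma m * x powr (2 * m - 1) * exp (- m * x\<^sup>2) else 0)"

text \<open>Index set gathering the variables X_1..X_mu, Y_1..Y_mu, xi into one family,
  used to express mutual independence.\<close>
definition fb_index :: "nat \<Rightarrow> (nat + nat + unit) set" where
  "fb_index \<mu> = Inl ` {..<\<mu>} \<union> (Inr \<circ> Inl) ` {..<\<mu>} \<union> {Inr (Inr ())}"

definition fb_family ::
  "(nat \<Rightarrow> 'a \<Rightarrow> real) \<Rightarrow> (nat \<Rightarrow> 'a \<Rightarrow> real) \<Rightarrow> ('a \<Rightarrow> real) \<Rightarrow> nat + nat + unit \<Rightarrow> 'a \<Rightarrow> real" where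
  "fb_family X Y \<xi> k = (case k of Inl i \<Rightarrow> X i | Inr (Inl i) \<Rightarrow> Y i | Inr (Inr _) \<Rightarrow> \<xi>)"

end

theory Submission
  imports Defs
begin

text \<open>Conditionally on \<open>\<xi> = y\<close>, \<open>W\<close> is a sum of \<open>2\<mu>\<close> independent squared Gaussians with
  means \<open>p\<^sub>i y\<close>, \<open>q\<^sub>i y\<close>; completing the square gives
  \<open>E[exp (c W) | \<xi> = y] = ((1 - 2c\<sigma>\<^sub>x\<^sup>2)(1 - 2c\<sigma>\<^sub>y\<^sup>2))\<^bsup>-\<mu>/2\<^esup> exp (A y\<^sup>2)\<close> for \<open>c \<le> 0\<close>,
  with \<open>A = c (p\<^sup>2/(1 - 2c\<sigma>\<^sub>x\<^sup>2) + q\<^sup>2/(1 - 2c\<sigma>\<^sub>y\<^sup>2))\<close>. Averaging \<open>exp (A \<xi>\<^sup>2)\<close> over the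
  Nakagami law is a Gamma integral, \<open>(m/(m - A))\<^sup>m\<close>. Since \<open>E[\<xi>\<^sup>2] = 1\<close>,
  \<open>E[W] = \<mu>(\<sigma>\<^sub>x\<^sup>2 + \<sigma>\<^sub>y\<^sup>2) + p\<^sup>2 + q\<^sup>2\<close>, and \<open>s \<gamma> = c W\<close> for \<open>c = s \<gamma>bar / E[W]\<close>; rewriting the
  result in \<open>\<kappa>\<close>, \<open>\<rho>\<close>, \<open>\<eta>\<close> gives the closed form.\<close>

section \<open>Gamma integrals and the Nakagami distribution\<close>

lemma nn_integral_atLeast_eq_SUP:
  fixes f :: "real \<Rightarrow> ennreal" and r :: "nat \<Rightarrow> real"
  assumes [measurable]: "f \<in> borel_measurable borel"
    and "incseq r" and "filterlim r at_top sequentially"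
  shows "(\<integral>\<^sup>+x. f x * indicator {c..} x \<partial>lborel) = (SUP n. \<integral>\<^sup>+x. f x * indicator {c..r n} x \<partial>lborel)"
proof -
  have "(SUP n. f x * indicator {c..r n} x) = f x * indicator {c..} x" for x
  proof (cases "c \<le> x")
    case True
    obtain N where "x \<le> r N"
      using \<open>filterlim r at_top sequentially\<close> by (auto simp: filterlim_at_top eventually_sequentially)
    with True have "f x \<le> (SUP n. f x * indicator {c..r n} x)"
      by (intro SUP_upper2[of N]) auto
    moreover have "(SUP n. f x * indicator {c..r n} x) \<le> f x"
      by (rule SUP_least) (simp split: split_indicator)
    ultimately show ?thesis
      using True by simp
  qed simp
  moreover have "incseq (\<lambda>n x. f x * indicator {c..r n} x)"
    using \<open>incseq r\<close> by (force simp: incseq_def le_fun_def split: split_indicator)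
  ultimately show ?thesis
    by (simp flip: nn_integral_monotone_convergence_SUP)
qed

lemma nn_integral_substitution_square:
  fixes g :: "real \<Rightarrow> real"
  assumes [measurable]: "g \<in> borel_measurable borel" and "b > 0" and "r \<ge> 0"
  shows "(\<integral>\<^sup>+t. ennreal (g t) * indicator {0..b * r\<^sup>2} t \<partial>lborel)
      = (\<integral>\<^sup>+x. ennreal (g (b*x\<^sup>2) * (2*b*x)) * indicator {0..r} x \<partial>lborel)"
proof -
  have "((\<lambda>x. b*x\<^sup>2) has_real_derivative 2*b*x) (at x)" for x
    by (auto intro!: derivative_eq_intros)
  moreover have ennreal_mult_indicator: "ennreal (y * indicator A x) = ennreal y * indicator A x" for y A x
    by (simp split: split_indicator)
  ultimately show ?thesis
    using nn_integral_substitution[of "\<lambda>x. b*x\<^sup>2" 0 r g "\<lambda>x. 2*b*x"] assms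
    by (simp add: set_borel_measurable_def continuous_on_mult_left ennreal_mult_indicator)
qed

lemma nn_integral_powr_exp_square:
  fixes a b :: real
  assumes "a > 0" and "b > 0"
  shows "(\<integral>\<^sup>+x. ennreal (indicator {0..} x * x powr (2*a-1) * exp (-b*x\<^sup>2)) \<partial>lborel)
         = ennreal (Gamma a / (2 * b powr a))"
proof -
  define g where "g t = t powr (a-1) / exp t" for t :: real
  have [measurable]: "g \<in> borel_measurable borel" unfolding g_def by measurable
  have unbounded: "filterlim (\<lambda>n. b * (real n)\<^sup>2) at_top sequentially"
    using \<open>b > 0\<close> by (intro filterlim_tendsto_pos_mult_at_top[OF tendsto_const] filterlim_pow_at_top
        filterlim_real_sequentially) auto
  have ennreal_mult_indicator: "ennreal (r * indicator A x) = ennreal r * indicator A x" for r A x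
    by (simp split: split_indicator)
  have pointwise: "ennreal (indicator {0..} x * x powr (2*a-1) * exp (-b*x\<^sup>2))
      = ennreal (1 / (2 * b powr a)) * (ennreal (g (b*x\<^sup>2) * (2*b*x)) * indicator {0..} x)" for x
  proof (cases "x > 0")
    case True
    then have "(b*x\<^sup>2) powr (a-1) * (2*b*x) = 2 * b powr a * x powr (2*a-1)"
      using \<open>b > 0\<close> by (simp add: powr_mult powr_diff power2_eq_square field_simps flip: powr_add)
    then have "indicator {0..} x * x powr (2*a-1) * exp (-b*x\<^sup>2)
        = 1 / (2 * b powr a) * (g (b*x\<^sup>2) * (2*b*x) * indicator {0..} x)"
      using True \<open>b > 0\<close> by (simp add: g_def exp_minus field_simps)
    also have "ennreal \<dots>
        = ennreal (1 / (2 * b powr a)) * ennreal (g (b*x\<^sup>2) * (2*b*x) * indicator {0..} x)"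
      by (rule ennreal_mult') simp
    finally show ?thesis
      by (simp only: ennreal_mult_indicator)
  qed (cases "x = 0", auto simp: g_def split: split_indicator)
  have "ennreal (Gamma a) = (\<integral>\<^sup>+t. ennreal (g t) * indicator {0..} t \<partial>lborel)"
    using \<open>a > 0\<close> by (simp add: Gamma_conv_nn_integral_real g_def indicator_mult_ennreal mult.commute)
  also have "\<dots> = (SUP n. \<integral>\<^sup>+t. ennreal (g t) * indicator {0..b * (real n)\<^sup>2} t \<partial>lborel)"
    using \<open>b > 0\<close> unbounded
    by (intro nn_integral_atLeast_eq_SUP) (auto simp: incseq_def intro!: mult_left_mono power_mono)
  also have "\<dots> = (SUP n. \<integral>\<^sup>+x. ennreal (g (b*x\<^sup>2) * (2*b*x)) * indicator {0..real n} x \<partial>lborel)"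
    using \<open>b > 0\<close> by (simp add: nn_integral_substitution_square)
  also have "\<dots> = (\<integral>\<^sup>+x. ennreal (g (b*x\<^sup>2) * (2*b*x)) * indicator {0..} x \<partial>lborel)"
    by (intro nn_integral_atLeast_eq_SUP[symmetric]) (auto simp: incseq_def filterlim_real_sequentially)
  finally have Gamma_eq: "ennreal (Gamma a) = \<dots>" .
  have "(\<integral>\<^sup>+x. ennreal (indicator {0..} x * x powr (2*a-1) * exp (-b*x\<^sup>2)) \<partial>lborel)
      = ennreal (1 / (2 * b powr a)) * ennreal (Gamma a)"
    unfolding pointwise Gamma_eq by (rule nn_integral_cmult) measurable
  also have "\<dots> = ennreal (Gamma a / (2 * b powr a))"
    by (simp add: ennreal_mult'[symmetric])
  finally show ?thesis .
qed

lemma borel_measurable_nakagami_density [measurable]: "nakagami_density m \<in> borel_measurable borel"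
  unfolding nakagami_density_def by measurable

lemma AE_nakagami_pos: "AE x in density lborel (\<lambda>x. ennreal (nakagami_density m x)). x > 0"
  by (subst AE_density) (auto simp: nakagami_density_def)

lemma nakagami_nn_integral_powr_exp_square:
  fixes m c A :: real
  assumes "m > 0" and "m + c/2 > 0" and "A < m"
  shows "(\<integral>\<^sup>+x. ennreal (x powr c * exp (A*x\<^sup>2)) \<partial>density lborel (\<lambda>x. ennreal (nakagami_density m x)))
     = ennreal (m powr m * Gamma (m + c/2) / (Gamma m * (m - A) powr (m + c/2)))"
proof -
  define a where "a = m + c/2"
  have "nakagami_density m x * (x powr c * exp (A*x\<^sup>2))
      = 2 * m powr m / Gamma m * (indicator {0..} x * x powr (2*a-1) * exp (-(m-A)*x\<^sup>2))" for x
  proof -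
    have "x powr (2*a-1) = x powr (2*m-1) * x powr c" and "exp (-(m-A)*x\<^sup>2) = exp (-m*x\<^sup>2) * exp (A*x\<^sup>2)"
      by (simp_all add: a_def flip: powr_add exp_add) (simp_all add: algebra_simps)
    then show ?thesis
      by (cases "x = 0") (auto simp: nakagami_density_def split: split_indicator)
  qed
  then have "(\<integral>\<^sup>+x. ennreal (x powr c * exp (A*x\<^sup>2)) \<partial>density lborel (\<lambda>x. ennreal (nakagami_density m x)))
      = (\<integral>\<^sup>+x. ennreal (2 * m powr m / Gamma m)
          * ennreal (indicator {0..} x * x powr (2*a-1) * exp (-(m-A)*x\<^sup>2)) \<partial>lborel)"
    using \<open>m > 0\<close> by (simp add: nn_integral_density flip: ennreal_mult' ennreal_mult'')
  also have "\<dots> = ennreal (2 * m powr m / Gamma m) * ennreal (Gamma a / (2 * (m-A) powr a))"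
    using nn_integral_powr_exp_square[of a "m - A"] assms by (simp add: a_def nn_integral_cmult)
  also have "\<dots> = ennreal (m powr m * Gamma a / (Gamma m * (m - A) powr a))"
    using \<open>m > 0\<close> by (simp flip: ennreal_mult')
  finally show ?thesis unfolding a_def .
qed

lemma nakagami_nn_integral_exp_square:
  fixes m A :: real
  assumes "m > 0" and "A < m"
  shows "(\<integral>\<^sup>+x. ennreal (exp (A*x\<^sup>2)) \<partial>density lborel (\<lambda>x. ennreal (nakagami_density m x)))
     = ennreal ((m / (m - A)) powr m)"
proof -
  have "(\<integral>\<^sup>+x. ennreal (exp (A*x\<^sup>2)) \<partial>density lborel (\<lambda>x. ennreal (nakagami_density m x)))
      = (\<integral>\<^sup>+x. ennreal (x powr 0 * exp (A*x\<^sup>2)) \<partial>density lborel (\<lambda>x. ennreal (nakagami_density m x)))"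
    using AE_nakagami_pos[of m] by (intro nn_integral_cong_AE) (auto elim!: eventually_mono)
  also have "\<dots> = ennreal ((m / (m - A)) powr m)"
  proof -
    have "Gamma m \<noteq> 0"
      using Gamma_real_pos[OF \<open>m > 0\<close>] by linarith
    then show ?thesis
      by (subst nakagami_nn_integral_powr_exp_square) (use assms in \<open>simp_all add: powr_divide\<close>)
  qed
  finally show ?thesis .
qed

lemma prob_space_nakagami_density:
  assumes "m > 0"
  shows "prob_space (density lborel (\<lambda>x. ennreal (nakagami_density m x)))"
proof
  show "emeasure (density lborel (\<lambda>x. ennreal (nakagami_density m x)))
      (space (density lborel (\<lambda>x. ennreal (nakagami_density m x)))) = 1"
    using nakagami_nn_integral_exp_square[of m 0] assms by simp
qed

lemma nakagami_nn_integral_square: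
  fixes m :: real
  assumes "m > 0"
  shows "(\<integral>\<^sup>+x. ennreal (x\<^sup>2) \<partial>density lborel (\<lambda>x. ennreal (nakagami_density m x))) = 1"
proof -
  have "(\<integral>\<^sup>+x. ennreal (x\<^sup>2) \<partial>density lborel (\<lambda>x. ennreal (nakagami_density m x)))
      = (\<integral>\<^sup>+x. ennreal (x powr 2 * exp (0*x\<^sup>2)) \<partial>density lborel (\<lambda>x. ennreal (nakagami_density m x)))"
    using AE_nakagami_pos[of m] by (intro nn_integral_cong_AE) (auto elim!: eventually_mono)
  also have "\<dots> = ennreal (m powr m * Gamma (m + 1) / (Gamma m * m powr (m + 1)))"
    by (subst nakagami_nn_integral_powr_exp_square) (use assms in simp_all)
  also have "\<dots> = 1"
  proof -
    have "Gamma (m + 1) = m * Gamma m"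
      using assms by (intro Gamma_plus1) (auto elim!: nonpos_Ints_cases)
    moreover have "Gamma m \<noteq> 0"
      using Gamma_real_pos[OF assms] by linarith
    ultimately show ?thesis
      using assms by (simp add: powr_add)
  qed
  finally show ?thesis .
qed

section \<open>Moments of a shifted Gaussian\<close>

lemma nn_integral_normal_exp_shifted_square:
  fixes \<sigma> t a :: real
  assumes "\<sigma> > 0" and "t \<le> 0"
  shows "(\<integral>\<^sup>+x. ennreal (exp (t*(x+a)\<^sup>2)) \<partial>density lborel (\<lambda>x. ennreal (normal_density 0 \<sigma> x)))
     = ennreal ((1 - 2*t*\<sigma>\<^sup>2) powr (-1/2) * exp (t*a\<^sup>2/(1 - 2*t*\<sigma>\<^sup>2)))"
proof -
  define C where "C = 1 - 2*t*\<sigma>\<^sup>2"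
  have "C \<ge> 1" unfolding C_def using \<open>t \<le> 0\<close> by (simp add: mult_nonpos_nonneg)
  define \<sigma>' where "\<sigma>' = \<sigma> / sqrt C"
  define \<mu>' where "\<mu>' = 2*t*\<sigma>\<^sup>2*a/C"
  define K where "K = C powr (-1/2) * exp (t*a\<^sup>2/C)"
  have "\<sigma>' > 0" and \<sigma>'_square: "\<sigma>'\<^sup>2 = \<sigma>\<^sup>2/C"
    unfolding \<sigma>'_def using \<open>\<sigma> > 0\<close> \<open>C \<ge> 1\<close> by (simp_all add: power_divide)
  \<comment> \<open>Completing the square: the tilted Gaussian is again Gaussian, with mean \<mu>' and
    standard deviation \<sigma>'.\<close>
  have tilt: "normal_density 0 \<sigma> x * exp (t*(x+a)\<^sup>2) = K * normal_density \<mu>' \<sigma>' x" for x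
  proof -
    have exponent: "-(x-0)\<^sup>2/(2*\<sigma>\<^sup>2) + t*(x+a)\<^sup>2 = t*a\<^sup>2/C + (-(x-\<mu>')\<^sup>2/(2*\<sigma>'\<^sup>2))"
    proof -
      have t_eq: "t = (1-C)/(2*\<sigma>\<^sup>2)" and \<mu>'_eq: "\<mu>' = (1-C)*a/C"
        unfolding C_def \<mu>'_def using \<open>\<sigma> > 0\<close> by (simp_all add: field_simps)
      show ?thesis
        unfolding \<sigma>'_square t_eq \<mu>'_eq using \<open>C \<ge> 1\<close> \<open>\<sigma> > 0\<close> by (simp add: field_simps power2_eq_square)
    qed
    have normalization: "1 / sqrt (2*pi*\<sigma>\<^sup>2) = C powr (-1/2) * (1 / sqrt (2*pi*\<sigma>'\<^sup>2))"
      unfolding \<sigma>'_square using \<open>C \<ge> 1\<close> \<open>\<sigma> > 0\<close>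
      by (simp add: real_sqrt_divide real_sqrt_mult powr_minus_divide powr_half_sqrt)
    have "normal_density 0 \<sigma> x * exp (t*(x+a)\<^sup>2)
        = 1 / sqrt (2*pi*\<sigma>\<^sup>2) * exp (-(x-0)\<^sup>2/(2*\<sigma>\<^sup>2) + t*(x+a)\<^sup>2)"
      unfolding normal_density_def exp_add by simp
    also have "\<dots> = K * normal_density \<mu>' \<sigma>' x"
      unfolding exponent normalization exp_add normal_density_def K_def by simp
    finally show ?thesis .
  qed
  have "(\<integral>\<^sup>+x. ennreal (exp (t*(x+a)\<^sup>2)) \<partial>density lborel (\<lambda>x. ennreal (normal_density 0 \<sigma> x)))
      = (\<integral>\<^sup>+x. ennreal K * ennreal (normal_density \<mu>' \<sigma>' x) \<partial>lborel)"
    by (simp add: nn_integral_density tilt K_def flip: ennreal_mult')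
  also have "\<dots> = ennreal K"
    using \<open>\<sigma>' > 0\<close> by (simp add: nn_integral_cmult nn_integral_eq_integral)
  finally show ?thesis
    unfolding K_def C_def .
qed

lemma nn_integral_normal_shifted_square:
  fixes \<sigma> a :: real
  assumes "\<sigma> > 0"
  shows "(\<integral>\<^sup>+x. ennreal ((x+a)\<^sup>2) \<partial>density lborel (\<lambda>x. ennreal (normal_density 0 \<sigma> x)))
     = ennreal (\<sigma>\<^sup>2 + a\<^sup>2)"
proof -
  have "has_bochner_integral lborel (\<lambda>x. normal_density 0 \<sigma> x * (x - 0) ^ (2 * 1)
      + 2*a*(normal_density 0 \<sigma> x * x) + a\<^sup>2 * normal_density 0 \<sigma> x) (\<sigma>\<^sup>2 + 2*a*0 + a\<^sup>2 * 1)"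
    using normal_moment_even[of \<sigma> 0 1] normal_moment_nz_1[of \<sigma> 0] assms
    by (intro has_bochner_integral_add has_bochner_integral_mult_right)
      (simp_all add: has_bochner_integral_iff)
  then have "has_bochner_integral lborel (\<lambda>x. normal_density 0 \<sigma> x * (x+a)\<^sup>2) (\<sigma>\<^sup>2 + a\<^sup>2)"
    by (rule has_bochner_integral_cong[THEN iffD1, rotated -1])
      (auto simp: power2_eq_square algebra_simps)
  then show ?thesis
    by (simp add: nn_integral_density nn_integral_eq_integral has_bochner_integral_iff
        flip: ennreal_mult'')
qed

section \<open>Independent families and product measures\<close>

lemma (in prob_space) nn_integral_indep_vars_PiM:
  assumes "indep_vars N F I" and "I \<noteq> {}"
    and "g \<in> borel_measurable (PiM I N)"
  shows "(\<integral>\<^sup>+\<omega>. g (\<lambda>i\<in>I. F i \<omega>) \<partial>M) = (\<integral>\<^sup>+x. g x \<partial>PiM I (\<lambda>i. distr M (N i) (F i)))"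
proof -
  have rv: "\<And>i. i \<in> I \<Longrightarrow> random_variable (N i) (F i)"
    using \<open>indep_vars N F I\<close> by (simp add: indep_vars_def)
  then have "(\<lambda>\<omega>. \<lambda>i\<in>I. F i \<omega>) \<in> measurable M (PiM I N)"
    by (rule measurable_restrict)
  then have "(\<integral>\<^sup>+\<omega>. g (\<lambda>i\<in>I. F i \<omega>) \<partial>M) = (\<integral>\<^sup>+x. g x \<partial>distr M (PiM I N) (\<lambda>\<omega>. \<lambda>i\<in>I. F i \<omega>))"
    using assms(3) by (simp add: nn_integral_distr)
  also have "distr M (PiM I N) (\<lambda>\<omega>. \<lambda>i\<in>I. F i \<omega>) = PiM I (\<lambda>i. distr M (N i) (F i))"
    using assms(1,2) rv by (simp add: indep_vars_iff_distr_eq_PiM')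
  finally show ?thesis .
qed

lemma nn_integral_PiM_component:
  assumes "\<And>i. i \<in> I \<Longrightarrow> prob_space (N i)" and "k \<in> I"
    and "h \<in> borel_measurable (N k)"
  shows "(\<integral>\<^sup>+x. h (x k) \<partial>PiM I N) = (\<integral>\<^sup>+u. h u \<partial>N k)"
proof -
  have "(\<integral>\<^sup>+x. h (x k) \<partial>PiM I N) = (\<integral>\<^sup>+u. h u \<partial>distr (PiM I N) (N k) (\<lambda>x. x k))"
    using \<open>k \<in> I\<close> assms(3) by (simp add: nn_integral_distr)
  also have "distr (PiM I N) (N k) (\<lambda>x. x k) = N k"
    using assms(1,2) by (rule distr_PiM_component)
  finally show ?thesis .
qed

section \<open>The Fluctuating Beckmann model\<close>

definition fb_fading_index :: "nat + nat + unit" where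
  "fb_fading_index = Inr (Inr ())"

definition fb_gauss_index :: "nat \<Rightarrow> (nat + nat + unit) set" where
  "fb_gauss_index \<mu> = Inl ` {..<\<mu>} \<union> (Inr \<circ> Inl) ` {..<\<mu>}"

lemma fb_index_eq_insert: "fb_index \<mu> = insert fb_fading_index (fb_gauss_index \<mu>)"
  by (auto simp: fb_index_def fb_fading_index_def fb_gauss_index_def)

lemma fb_fading_index_notin: "fb_fading_index \<notin> fb_gauss_index \<mu>"
  by (auto simp: fb_fading_index_def fb_gauss_index_def)

lemma prod_fb_gauss_index:
  "(\<Prod>k\<in>fb_gauss_index \<mu>. f k) = (\<Prod>i<\<mu>. f (Inl i) * f (Inr (Inl i)))"
proof -
  have "(\<Prod>k\<in>fb_gauss_index \<mu>. f k) = (\<Prod>k\<in>Inl ` {..<\<mu>}. f k) * (\<Prod>k\<in>(Inr \<circ> Inl) ` {..<\<mu>}. f k)"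
    unfolding fb_gauss_index_def by (intro prod.union_disjoint) auto
  also have "\<dots> = (\<Prod>i<\<mu>. f (Inl i)) * (\<Prod>i<\<mu>. f (Inr (Inl i)))"
    by (subst (1 2) prod.reindex) (auto simp: inj_on_def)
  finally show ?thesis
    by (simp add: prod.distrib)
qed

locale fb_model = prob_space M
  for M :: "'a measure" +
  fixes \<mu> :: nat and \<sigma>x \<sigma>y m :: real and p q :: "nat \<Rightarrow> real"
    and X Y :: "nat \<Rightarrow> 'a \<Rightarrow> real" and \<xi> :: "'a \<Rightarrow> real"
  assumes \<sigma>x_pos: "\<sigma>x > 0" and \<sigma>y_pos: "\<sigma>y > 0" and m_pos: "m > 0"
    and X_normal: "\<And>i. i < \<mu> \<Longrightarrow> distributed M lborel (X i) (normal_density 0 \<sigma>x)"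
    and Y_normal: "\<And>i. i < \<mu> \<Longrightarrow> distributed M lborel (Y i) (normal_density 0 \<sigma>y)"
    and \<xi>_nakagami: "distributed M lborel \<xi> (nakagami_density m)"
    and indep: "indep_vars (\<lambda>_. borel) (fb_family X Y \<xi>) (fb_index \<mu>)"
begin

definition marginal :: "nat + nat + unit \<Rightarrow> real measure" where
  "marginal k = (case k of
      Inl _ \<Rightarrow> density lborel (\<lambda>x. ennreal (normal_density 0 \<sigma>x x))
    | Inr (Inl _) \<Rightarrow> density lborel (\<lambda>x. ennreal (normal_density 0 \<sigma>y x))
    | Inr (Inr _) \<Rightarrow> density lborel (\<lambda>x. ennreal (nakagami_density m x)))"

lemma sets_marginal [measurable_cong]: "sets (marginal k) = sets borel"
  by (simp add: marginal_def split: sum.split)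

lemma prob_space_marginal: "prob_space (marginal k)"
  using \<sigma>x_pos \<sigma>y_pos m_pos
  by (simp add: marginal_def prob_space_normal_density prob_space_nakagami_density split: sum.split)

lemma distr_fb_family:
  assumes "k \<in> fb_index \<mu>"
  shows "distr M borel (fb_family X Y \<xi> k) = marginal k"
proof -
  have "distr M borel (fb_family X Y \<xi> k) = distr M lborel (fb_family X Y \<xi> k)"
    by (rule distr_cong) auto
  then show ?thesis
    using assms X_normal Y_normal \<xi>_nakagami
    by (auto simp: fb_index_def fb_family_def marginal_def distributed_def)
qed

abbreviation p2 :: real where "p2 \<equiv> \<Sum>i<\<mu>. (p i)\<^sup>2"

abbreviation q2 :: real where "q2 \<equiv> \<Sum>i<\<mu>. (q i)\<^sup>2"

definition W :: "'a \<Rightarrow> real" where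
  "W \<omega> = (\<Sum>i<\<mu>. (X i \<omega> + p i * \<xi> \<omega>)\<^sup>2 + (Y i \<omega> + q i * \<xi> \<omega>)\<^sup>2)"

definition W_given :: "real \<Rightarrow> (nat + nat + unit \<Rightarrow> real) \<Rightarrow> real" where
  "W_given y x = (\<Sum>i<\<mu>. (x (Inl i) + p i * y)\<^sup>2 + (x (Inr (Inl i)) + q i * y)\<^sup>2)"

lemma W_eq_W_given: "W \<omega> = W_given (\<xi> \<omega>) (\<lambda>k\<in>fb_index \<mu>. fb_family X Y \<xi> k \<omega>)"
  unfolding W_def W_given_def by (intro sum.cong) (auto simp: fb_index_def fb_family_def)

lemma measurable_W_given:
  "(\<lambda>v. W_given (v fb_fading_index) v) \<in> borel_measurable (PiM (fb_index \<mu>) (\<lambda>_. borel))"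
proof -
  have component: "(\<lambda>v. v k) \<in> borel_measurable (PiM (fb_index \<mu>) (\<lambda>_. borel))" if "k \<in> fb_index \<mu>" for k
    using that by (rule measurable_component_singleton)
  show ?thesis
    unfolding W_given_def
    by (intro borel_measurable_sum borel_measurable_add borel_measurable_power borel_measurable_times
        borel_measurable_const component) (auto simp: fb_index_def fb_fading_index_def)
qed

lemma nn_integral_W:
  assumes [measurable]: "h \<in> borel_measurable borel"
  shows "(\<integral>\<^sup>+\<omega>. h (W \<omega>) \<partial>M) =
    (\<integral>\<^sup>+y. \<integral>\<^sup>+x. h (W_given y x) \<partial>PiM (fb_gauss_index \<mu>) marginal
       \<partial>density lborel (\<lambda>x. ennreal (nakagami_density m x)))"
proof -
  interpret marginals: product_sigma_finite marginal
    by (simp add: product_sigma_finite_def prob_space_marginal prob_space_imp_sigma_finite)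
  define g where "g v = h (W_given (v fb_fading_index) v)" for v
  have g_measurable: "g \<in> borel_measurable (PiM (fb_index \<mu>) (\<lambda>_. borel))"
    unfolding g_def using measurable_W_given by measurable
  \<comment> \<open>Independence makes the joint law a product; integrating the fading coordinate last
    conditions on it.\<close>
  have "(\<integral>\<^sup>+\<omega>. h (W \<omega>) \<partial>M) = (\<integral>\<^sup>+\<omega>. g (\<lambda>k\<in>fb_index \<mu>. fb_family X Y \<xi> k \<omega>) \<partial>M)"
    by (simp add: g_def W_eq_W_given fb_index_def fb_fading_index_def fb_family_def)
  also have "\<dots> = (\<integral>\<^sup>+v. g v \<partial>PiM (fb_index \<mu>) (\<lambda>k. distr M borel (fb_family X Y \<xi> k)))"
    by (rule nn_integral_indep_vars_PiM[OF indep _ g_measurable]) (simp add: fb_index_def)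
  also have "\<dots> = (\<integral>\<^sup>+v. g v \<partial>PiM (insert fb_fading_index (fb_gauss_index \<mu>)) marginal)"
    by (simp add: distr_fb_family fb_index_eq_insert[symmetric] cong: PiM_cong)
  also have "\<dots> = (\<integral>\<^sup>+y. \<integral>\<^sup>+x. g (x(fb_fading_index := y)) \<partial>PiM (fb_gauss_index \<mu>) marginal
      \<partial>marginal fb_fading_index)"
  proof (rule marginals.product_nn_integral_insert_rev)
    have "sets (PiM (insert fb_fading_index (fb_gauss_index \<mu>)) marginal)
        = sets (PiM (fb_index \<mu>) (\<lambda>_. borel))"
      by (rule sets_PiM_cong) (simp_all add: fb_index_eq_insert sets_marginal)
    then show "g \<in> borel_measurable (PiM (insert fb_fading_index (fb_gauss_index \<mu>)) marginal)"
      using g_measurable by (simp cong: measurable_cong_sets)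
  qed (simp_all add: fb_fading_index_notin, simp add: fb_gauss_index_def)
  also have "\<dots> = (\<integral>\<^sup>+y. \<integral>\<^sup>+x. h (W_given y x) \<partial>PiM (fb_gauss_index \<mu>) marginal
       \<partial>density lborel (\<lambda>x. ennreal (nakagami_density m x)))"
    by (simp add: g_def W_given_def marginal_def fb_fading_index_def)
  finally show ?thesis .
qed

lemma measurable_W [measurable]: "W \<in> borel_measurable M"
proof -
  have "X i \<in> borel_measurable M" "Y i \<in> borel_measurable M" if "i < \<mu>" for i
    using that X_normal Y_normal by (auto simp: distributed_def)
  moreover have "\<xi> \<in> borel_measurable M"
    using \<xi>_nakagami by (simp add: distributed_def)
  ultimately show ?thesis
    unfolding W_def by (intro borel_measurable_sum) auto
qed

lemma nn_integral_W_given: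
  "(\<integral>\<^sup>+x. ennreal (W_given y x) \<partial>PiM (fb_gauss_index \<mu>) marginal)
     = ennreal (real \<mu> * (\<sigma>x\<^sup>2 + \<sigma>y\<^sup>2) + (p2 + q2) * y\<^sup>2)"
proof -
  have component: "(\<integral>\<^sup>+x. ennreal ((x k + a)\<^sup>2) \<partial>PiM (fb_gauss_index \<mu>) marginal) = ennreal (\<sigma>\<^sup>2 + a\<^sup>2)"
    if "k \<in> fb_gauss_index \<mu>" and "marginal k = density lborel (\<lambda>x. ennreal (normal_density 0 \<sigma> x))"
      and "\<sigma> > 0" for k a \<sigma>
    using that by (subst nn_integral_PiM_component[OF prob_space_marginal])
      (simp_all add: nn_integral_normal_shifted_square)
  have gauss_mem: "Inl i \<in> fb_gauss_index \<mu>" "Inr (Inl i) \<in> fb_gauss_index \<mu>" if "i \<in> {..<\<mu>}" for i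
    using that by (auto simp: fb_gauss_index_def)
  have measurable: "(\<lambda>x. ennreal ((x k + a)\<^sup>2)) \<in> borel_measurable (PiM (fb_gauss_index \<mu>) marginal)"
    if "k \<in> fb_gauss_index \<mu>" for k a
    using that by measurable
  have "(\<integral>\<^sup>+x. ennreal (W_given y x) \<partial>PiM (fb_gauss_index \<mu>) marginal)
      = (\<integral>\<^sup>+x. (\<Sum>i<\<mu>. ennreal ((x (Inl i) + p i * y)\<^sup>2) + ennreal ((x (Inr (Inl i)) + q i * y)\<^sup>2))
          \<partial>PiM (fb_gauss_index \<mu>) marginal)"
    by (simp add: W_given_def ennreal_plus sum_ennreal[symmetric] del: sum_ennreal)
  also have "\<dots> = (\<Sum>i<\<mu>. (\<integral>\<^sup>+x. ennreal ((x (Inl i) + p i * y)\<^sup>2) \<partial>PiM (fb_gauss_index \<mu>) marginal)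
      + (\<integral>\<^sup>+x. ennreal ((x (Inr (Inl i)) + q i * y)\<^sup>2) \<partial>PiM (fb_gauss_index \<mu>) marginal))"
    using gauss_mem
    by (subst nn_integral_sum) (auto intro!: sum.cong nn_integral_add borel_measurable_add measurable)
  also have "\<dots> = (\<Sum>i<\<mu>. ennreal (\<sigma>x\<^sup>2 + (p i * y)\<^sup>2) + ennreal (\<sigma>y\<^sup>2 + (q i * y)\<^sup>2))"
    using gauss_mem \<sigma>x_pos \<sigma>y_pos
    by (intro sum.cong refl arg_cong2[where f="(+)"] component) (auto simp: marginal_def)
  also have "\<dots> = ennreal (real \<mu> * (\<sigma>x\<^sup>2 + \<sigma>y\<^sup>2) + (p2 + q2) * y\<^sup>2)"
    by (simp add: ennreal_plus[symmetric] sum.distrib power_mult_distrib sum_distrib_left algebra_simps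
        del: ennreal_plus)
  finally show ?thesis .
qed


lemma nn_integral_exp_W_given:
  assumes "c \<le> 0"
  shows "(\<integral>\<^sup>+x. ennreal (exp (c * W_given y x)) \<partial>PiM (fb_gauss_index \<mu>) marginal)
     = ennreal (((1 - 2*c*\<sigma>x\<^sup>2) * (1 - 2*c*\<sigma>y\<^sup>2)) powr (- real \<mu> / 2)
         * exp (c * (p2 / (1 - 2*c*\<sigma>x\<^sup>2) + q2 / (1 - 2*c*\<sigma>y\<^sup>2)) * y\<^sup>2))"
proof -
  interpret marginals: product_sigma_finite marginal
    by (simp add: product_sigma_finite_def prob_space_marginal prob_space_imp_sigma_finite)
  define Cx where "Cx = 1 - 2*c*\<sigma>x\<^sup>2"
  define Cy where "Cy = 1 - 2*c*\<sigma>y\<^sup>2"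
  have "Cx \<ge> 1" "Cy \<ge> 1"
    unfolding Cx_def Cy_def using \<open>c \<le> 0\<close> by (simp_all add: mult_nonpos_nonneg)
  define G where "G C a = C powr (-1/2) * exp (c*a\<^sup>2/C)" for C a :: real
  define h where "h k u = ennreal (exp (c * (u + (case k of
      Inl i \<Rightarrow> p i | Inr (Inl i) \<Rightarrow> q i | Inr (Inr _) \<Rightarrow> 0) * y)\<^sup>2))"
    for k :: "nat + nat + unit" and u :: real
  have factorize: "ennreal (exp (c * W_given y x)) = (\<Prod>k\<in>fb_gauss_index \<mu>. h k (x k))" for x
  proof -
    have "exp (c * W_given y x)
        = (\<Prod>i<\<mu>. exp (c * (x (Inl i) + p i * y)\<^sup>2) * exp (c * (x (Inr (Inl i)) + q i * y)\<^sup>2))"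
      by (simp add: W_given_def exp_sum sum_distrib_left distrib_left exp_add)
    then show ?thesis
      by (simp add: prod_fb_gauss_index h_def ennreal_mult'' flip: prod_ennreal)
  qed
  have "(\<integral>\<^sup>+x. ennreal (exp (c * W_given y x)) \<partial>PiM (fb_gauss_index \<mu>) marginal)
      = (\<Prod>k\<in>fb_gauss_index \<mu>. \<integral>\<^sup>+u. h k u \<partial>marginal k)"
    unfolding factorize
    by (rule marginals.product_nn_integral_prod) (auto simp: fb_gauss_index_def h_def)
  also have "\<dots> = (\<Prod>i<\<mu>. ennreal (G Cx (p i * y)) * ennreal (G Cy (q i * y)))"
    using \<sigma>x_pos \<sigma>y_pos \<open>c \<le> 0\<close>
    by (simp add: prod_fb_gauss_index h_def marginal_def G_def Cx_def Cy_def
        nn_integral_normal_exp_shifted_square)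
  also have "\<dots> = ennreal (\<Prod>i<\<mu>. G Cx (p i * y) * G Cy (q i * y))"
    by (subst prod_ennreal[symmetric]) (auto simp: G_def ennreal_mult'')
  also have "(\<Prod>i<\<mu>. G Cx (p i * y) * G Cy (q i * y))
      = (Cx * Cy) powr (- real \<mu> / 2) * exp (c * (p2 / Cx + q2 / Cy) * y\<^sup>2)"
  proof -
    have "(\<Prod>i<\<mu>. G Cx (p i * y) * G Cy (q i * y))
        = ((Cx * Cy) powr (-1/2)) ^ \<mu> * exp (\<Sum>i<\<mu>. c * (p i * y)\<^sup>2 / Cx + c * (q i * y)\<^sup>2 / Cy)"
      using \<open>Cx \<ge> 1\<close> \<open>Cy \<ge> 1\<close> by (simp add: G_def prod.distrib exp_sum exp_add powr_mult algebra_simps)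
    also have "((Cx * Cy) powr (-1/2)) ^ \<mu> = (Cx * Cy) powr (- real \<mu> / 2)"
      using \<open>Cx \<ge> 1\<close> \<open>Cy \<ge> 1\<close> by (simp add: powr_power)
    also have "(\<Sum>i<\<mu>. c * (p i * y)\<^sup>2 / Cx + c * (q i * y)\<^sup>2 / Cy) = c * (p2 / Cx + q2 / Cy) * y\<^sup>2"
      by (simp add: sum.distrib power_mult_distrib sum_divide_distrib[symmetric]
          sum_distrib_left[symmetric] sum_distrib_right[symmetric] algebra_simps)
    finally show ?thesis .
  qed
  finally show ?thesis
    unfolding Cx_def Cy_def .
qed

lemma expectation_W: "expectation W = real \<mu> * (\<sigma>x\<^sup>2 + \<sigma>y\<^sup>2) + p2 + q2"
proof -
  interpret fading: prob_space "density lborel (\<lambda>x. ennreal (nakagami_density m x))"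
    using m_pos by (rule prob_space_nakagami_density)
  define a where "a = real \<mu> * (\<sigma>x\<^sup>2 + \<sigma>y\<^sup>2)"
  define b where "b = p2 + q2"
  have "a \<ge> 0" "b \<ge> 0"
    unfolding a_def b_def by (simp_all add: add_nonneg_nonneg sum_nonneg)
  then have "(\<integral>\<^sup>+\<omega>. ennreal (W \<omega>) \<partial>M)
      = (\<integral>\<^sup>+y. ennreal a + ennreal b * ennreal (y\<^sup>2)
          \<partial>density lborel (\<lambda>x. ennreal (nakagami_density m x)))"
    by (simp add: nn_integral_W nn_integral_W_given a_def b_def ennreal_mult')
  also have "\<dots> = ennreal (a + b)"
    using m_pos \<open>a \<ge> 0\<close> \<open>b \<ge> 0\<close> fading.emeasure_space_1
    by (simp add: nn_integral_add nn_integral_cmult nakagami_nn_integral_square)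
  finally have "expectation W = enn2real (ennreal (a + b))"
    by (subst integral_eq_nn_integral) (auto simp: W_def intro!: sum_nonneg)
  then show ?thesis
    using \<open>a \<ge> 0\<close> \<open>b \<ge> 0\<close> by (simp add: a_def b_def del: ennreal_plus)
qed

lemma expectation_exp_W:
  assumes "c \<le> 0"
  shows "expectation (\<lambda>\<omega>. exp (c * W \<omega>))
     = ((1 - 2*c*\<sigma>x\<^sup>2) * (1 - 2*c*\<sigma>y\<^sup>2)) powr (- real \<mu> / 2)
       * (m / (m - c * (p2 / (1 - 2*c*\<sigma>x\<^sup>2) + q2 / (1 - 2*c*\<sigma>y\<^sup>2)))) powr m"
proof -
  define K where "K = ((1 - 2*c*\<sigma>x\<^sup>2) * (1 - 2*c*\<sigma>y\<^sup>2)) powr (- real \<mu> / 2)"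
  define A where "A = c * (p2 / (1 - 2*c*\<sigma>x\<^sup>2) + q2 / (1 - 2*c*\<sigma>y\<^sup>2))"
  have "2*c*\<sigma>x\<^sup>2 \<le> 0" "2*c*\<sigma>y\<^sup>2 \<le> 0"
    using \<open>c \<le> 0\<close> by (simp_all add: mult_nonpos_nonneg)
  then have "A \<le> 0"
    unfolding A_def using \<open>c \<le> 0\<close>
    by (intro mult_nonpos_nonneg add_nonneg_nonneg divide_nonneg_nonneg sum_nonneg) auto
  have "(\<integral>\<^sup>+\<omega>. ennreal (exp (c * W \<omega>)) \<partial>M)
      = (\<integral>\<^sup>+y. \<integral>\<^sup>+x. ennreal (exp (c * W_given y x)) \<partial>PiM (fb_gauss_index \<mu>) marginal
          \<partial>density lborel (\<lambda>x. ennreal (nakagami_density m x)))"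
    using nn_integral_W[of "\<lambda>w. ennreal (exp (c * w))"] by simp
  also have "\<dots> = (\<integral>\<^sup>+y. ennreal K * ennreal (exp (A * y\<^sup>2))
      \<partial>density lborel (\<lambda>x. ennreal (nakagami_density m x)))"
    using \<open>c \<le> 0\<close> by (simp add: nn_integral_exp_W_given K_def A_def ennreal_mult)
  also have "\<dots> = ennreal (K * (m / (m - A)) powr m)"
    using \<open>A \<le> 0\<close> m_pos
    by (simp add: nn_integral_cmult nakagami_nn_integral_exp_square K_def ennreal_mult)
  finally show ?thesis
    unfolding K_def A_def by (subst integral_eq_nn_integral) auto
qed

end

definition fb_mgf :: "real \<Rightarrow> real \<Rightarrow> nat \<Rightarrow> real \<Rightarrow> real \<Rightarrow> real \<Rightarrow> real \<Rightarrow> real" where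
  "fb_mgf \<gamma>bar \<kappa> \<mu> m \<eta> \<rho> s =
     1 / ((1 - 2 * \<eta> * \<gamma>bar * s / (real \<mu> * (1 + \<eta>) * (1 + \<kappa>))) powr (real \<mu> / 2)
          * (1 - 2 * \<gamma>bar * s / (real \<mu> * (1 + \<eta>) * (1 + \<kappa>))) powr (real \<mu> / 2))
     * (1 - 1 / m * (real \<mu> * \<kappa> * (\<rho>\<^sup>2 / (1 + \<rho>\<^sup>2)) * (1 + \<eta>) * \<gamma>bar * s
                       / ((1 + \<eta>) * (1 + \<kappa>) * real \<mu> - 2 * \<eta> * \<gamma>bar * s)
                     + real \<mu> * \<kappa> * (1 / (1 + \<rho>\<^sup>2)) * (1 + \<eta>) * \<gamma>bar * s
                       / ((1 + \<eta>) * (1 + \<kappa>) * real \<mu> - 2 * \<gamma>bar * s))) powr (- m)"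

lemma fb_parameter_identities:
  fixes \<mu> :: nat and \<sigma>x \<sigma>y p2 q2 :: real
  assumes "\<mu> > 0" "\<sigma>x > 0" "\<sigma>y > 0" "p2 \<ge> 0" "q2 > 0"
  defines "\<kappa> \<equiv> (p2 + q2) / (real \<mu> * (\<sigma>x\<^sup>2 + \<sigma>y\<^sup>2))" and "\<eta> \<equiv> \<sigma>x\<^sup>2 / \<sigma>y\<^sup>2"
    and "\<rho> \<equiv> sqrt (p2 / q2)"
  shows "real \<mu> * (1 + \<eta>) * (1 + \<kappa>) = (real \<mu> * (\<sigma>x\<^sup>2 + \<sigma>y\<^sup>2) + p2 + q2) / \<sigma>y\<^sup>2"
    and "real \<mu> * \<kappa> * (\<rho>\<^sup>2 / (1 + \<rho>\<^sup>2)) * (1 + \<eta>) = p2 / \<sigma>y\<^sup>2"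
    and "real \<mu> * \<kappa> * (1 / (1 + \<rho>\<^sup>2)) * (1 + \<eta>) = q2 / \<sigma>y\<^sup>2"
proof -
  have "\<sigma>x\<^sup>2 + \<sigma>y\<^sup>2 > 0" "p2 + q2 > 0" "\<sigma>y\<^sup>2 > 0"
    using assms by (simp_all add: add_pos_pos add_nonneg_pos)
  then have "\<sigma>x\<^sup>2 + \<sigma>y\<^sup>2 \<noteq> 0" "p2 + q2 \<noteq> 0" "\<sigma>y\<^sup>2 \<noteq> 0"
    by linarith+
  have one_plus_\<eta>: "1 + \<eta> = (\<sigma>x\<^sup>2 + \<sigma>y\<^sup>2) / \<sigma>y\<^sup>2"
    unfolding \<eta>_def using \<open>\<sigma>y\<^sup>2 \<noteq> 0\<close> by (simp add: field_simps)
  have \<mu>\<kappa>: "real \<mu> * \<kappa> = (p2 + q2) / (\<sigma>x\<^sup>2 + \<sigma>y\<^sup>2)"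
    unfolding \<kappa>_def using \<open>\<mu> > 0\<close> by simp
  then have "real \<mu> * (1 + \<kappa>) = (real \<mu> * (\<sigma>x\<^sup>2 + \<sigma>y\<^sup>2) + p2 + q2) / (\<sigma>x\<^sup>2 + \<sigma>y\<^sup>2)"
    using \<open>\<sigma>x\<^sup>2 + \<sigma>y\<^sup>2 \<noteq> 0\<close> by (simp add: field_simps)
  then show "real \<mu> * (1 + \<eta>) * (1 + \<kappa>) = (real \<mu> * (\<sigma>x\<^sup>2 + \<sigma>y\<^sup>2) + p2 + q2) / \<sigma>y\<^sup>2"
    unfolding one_plus_\<eta> using \<open>\<sigma>x\<^sup>2 + \<sigma>y\<^sup>2 \<noteq> 0\<close> \<open>\<sigma>y\<^sup>2 \<noteq> 0\<close> by (simp add: field_simps)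
  have \<rho>_square: "\<rho>\<^sup>2 = p2 / q2"
    unfolding \<rho>_def using assms by simp
  have "\<rho>\<^sup>2 / (1 + \<rho>\<^sup>2) = p2 / (p2 + q2)" and "1 / (1 + \<rho>\<^sup>2) = q2 / (p2 + q2)"
    unfolding \<rho>_square using \<open>q2 > 0\<close> \<open>p2 + q2 \<noteq> 0\<close> by (simp_all add: field_simps)
  then show "real \<mu> * \<kappa> * (\<rho>\<^sup>2 / (1 + \<rho>\<^sup>2)) * (1 + \<eta>) = p2 / \<sigma>y\<^sup>2"
    and "real \<mu> * \<kappa> * (1 / (1 + \<rho>\<^sup>2)) * (1 + \<eta>) = q2 / \<sigma>y\<^sup>2"
    unfolding \<mu>\<kappa> one_plus_\<eta>
    using \<open>\<sigma>x\<^sup>2 + \<sigma>y\<^sup>2 \<noteq> 0\<close> \<open>p2 + q2 \<noteq> 0\<close> \<open>\<sigma>y\<^sup>2 \<noteq> 0\<close> by simp_all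
qed

text \<open>The scale \<open>c\<close> is chosen so that \<open>s \<gamma> = c W\<close>, the denominator being \<open>E[W]\<close>.\<close>
lemma fb_mgf_eq:
  fixes \<mu> :: nat and \<sigma>x \<sigma>y m \<gamma>bar s p2 q2 :: real
  assumes "\<mu> > 0" "\<sigma>x > 0" "\<sigma>y > 0" "m > 0" "\<gamma>bar > 0" "p2 \<ge> 0" "q2 > 0" "s \<le> 0"
  defines "c \<equiv> s * \<gamma>bar / (real \<mu> * (\<sigma>x\<^sup>2 + \<sigma>y\<^sup>2) + p2 + q2)"
  shows "fb_mgf \<gamma>bar ((p2 + q2) / (real \<mu> * (\<sigma>x\<^sup>2 + \<sigma>y\<^sup>2))) \<mu> m (\<sigma>x\<^sup>2 / \<sigma>y\<^sup>2) (sqrt (p2 / q2)) s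
    = ((1 - 2*c*\<sigma>x\<^sup>2) * (1 - 2*c*\<sigma>y\<^sup>2)) powr (- real \<mu> / 2)
       * (m / (m - c * (p2 / (1 - 2*c*\<sigma>x\<^sup>2) + q2 / (1 - 2*c*\<sigma>y\<^sup>2)))) powr m"
proof -
  define EW where "EW = real \<mu> * (\<sigma>x\<^sup>2 + \<sigma>y\<^sup>2) + p2 + q2"
  define \<kappa> where "\<kappa> = (p2 + q2) / (real \<mu> * (\<sigma>x\<^sup>2 + \<sigma>y\<^sup>2))"
  define \<eta> where "\<eta> = \<sigma>x\<^sup>2 / \<sigma>y\<^sup>2"
  define \<rho> where "\<rho> = sqrt (p2 / q2)"
  define Cx where "Cx = 1 - 2*c*\<sigma>x\<^sup>2"
  define Cy where "Cy = 1 - 2*c*\<sigma>y\<^sup>2"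
  define A where "A = c * (p2 / Cx + q2 / Cy)"
  note identities = fb_parameter_identities[OF assms(1-3,6,7), folded EW_def \<kappa>_def \<eta>_def \<rho>_def]
  have "\<sigma>y\<^sup>2 > 0" "real \<mu> * (\<sigma>x\<^sup>2 + \<sigma>y\<^sup>2) > 0"
    using assms by (simp_all add: add_pos_pos)
  then have "EW > 0"
    unfolding EW_def using assms by linarith
  then have "c \<le> 0"
    unfolding c_def EW_def[symmetric] using assms by (simp add: divide_nonpos_pos mult_nonpos_nonneg)
  then have "Cx \<ge> 1" "Cy \<ge> 1"
    unfolding Cx_def Cy_def by (simp_all add: mult_nonpos_nonneg)
  have los_x: "1 - 2 * \<eta> * \<gamma>bar * s / (real \<mu> * (1 + \<eta>) * (1 + \<kappa>)) = Cx"
    and los_y: "1 - 2 * \<gamma>bar * s / (real \<mu> * (1 + \<eta>) * (1 + \<kappa>)) = Cy"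
    unfolding identities(1) unfolding Cx_def Cy_def c_def \<eta>_def EW_def[symmetric]
    using \<open>\<sigma>y\<^sup>2 > 0\<close> \<open>EW > 0\<close> by (simp_all add: field_simps)
  have den_x: "(1 + \<eta>) * (1 + \<kappa>) * real \<mu> - 2 * \<eta> * \<gamma>bar * s = EW * Cx / \<sigma>y\<^sup>2"
    and den_y: "(1 + \<eta>) * (1 + \<kappa>) * real \<mu> - 2 * \<gamma>bar * s = EW * Cy / \<sigma>y\<^sup>2"
    using identities(1) los_x los_y \<open>EW > 0\<close> \<open>\<sigma>y\<^sup>2 > 0\<close> by (simp_all add: field_simps)
  have fading_term:
    "real \<mu> * \<kappa> * (\<rho>\<^sup>2 / (1 + \<rho>\<^sup>2)) * (1 + \<eta>) * \<gamma>bar * s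
        / ((1 + \<eta>) * (1 + \<kappa>) * real \<mu> - 2 * \<eta> * \<gamma>bar * s)
      + real \<mu> * \<kappa> * (1 / (1 + \<rho>\<^sup>2)) * (1 + \<eta>) * \<gamma>bar * s
        / ((1 + \<eta>) * (1 + \<kappa>) * real \<mu> - 2 * \<gamma>bar * s) = A"
    unfolding identities(2,3) den_x den_y A_def c_def EW_def[symmetric]
    using \<open>Cx \<ge> 1\<close> \<open>Cy \<ge> 1\<close> \<open>EW > 0\<close> \<open>\<sigma>y\<^sup>2 > 0\<close> by (simp add: field_simps)
  have "A \<le> 0"
    unfolding A_def using \<open>c \<le> 0\<close> \<open>Cx \<ge> 1\<close> \<open>Cy \<ge> 1\<close> assms
    by (intro mult_nonpos_nonneg add_nonneg_nonneg divide_nonneg_pos) auto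
  then have "(1 - 1 / m * A) powr (-m) = (m / (m - A)) powr m"
    using \<open>m > 0\<close> by (simp add: field_simps powr_minus_divide powr_divide)
  moreover have "1 / (Cx powr (real \<mu> / 2) * Cy powr (real \<mu> / 2)) = (Cx * Cy) powr (- real \<mu> / 2)"
    using \<open>Cx \<ge> 1\<close> \<open>Cy \<ge> 1\<close> by (simp add: powr_minus_divide powr_mult)
  ultimately show ?thesis
    unfolding fb_mgf_def \<kappa>_def[symmetric] \<eta>_def[symmetric] \<rho>_def[symmetric] los_x los_y fading_term
    by (simp add: Cx_def Cy_def A_def)
qed

theorem lemma1:
  fixes M :: "'a measure"
    and \<mu> :: nat and \<sigma>x \<sigma>y m \<gamma>bar s :: real
    and p q :: "nat \<Rightarrow> real"
    and X Y :: "nat \<Rightarrow> 'a \<Rightarrow> real" and \<xi> :: "'a \<Rightarrow> real"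
  assumes "prob_space M"
    and "\<mu> > 0" and "\<sigma>x > 0" and "\<sigma>y > 0" and "m > 0" and "\<gamma>bar > 0"
    and "(\<Sum>i<\<mu>. (q i)\<^sup>2) > 0"
    and "\<And>i. i < \<mu> \<Longrightarrow> distributed M lborel (X i) (normal_density 0 \<sigma>x)"
    and "\<And>i. i < \<mu> \<Longrightarrow> distributed M lborel (Y i) (normal_density 0 \<sigma>y)"
    and "distributed M lborel \<xi> (nakagami_density m)"
    and "prob_space.indep_vars M (\<lambda>_. borel) (fb_family X Y \<xi>) (fb_index \<mu>)"
    and "s \<le> 0"
  shows
    "let p2 = (\<Sum>i<\<mu>. (p i)\<^sup>2); q2 = (\<Sum>i<\<mu>. (q i)\<^sup>2);
         W = (\<lambda>\<omega>. \<Sum>i<\<mu>. (X i \<omega> + p i * \<xi> \<omega>)\<^sup>2 + (Y i \<omega> + q i * \<xi> \<omega>)\<^sup>2);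
         \<gamma> = (\<lambda>\<omega>. \<gamma>bar * W \<omega> / prob_space.expectation M W);
         \<kappa> = (p2 + q2) / (real \<mu> * (\<sigma>x\<^sup>2 + \<sigma>y\<^sup>2));
         \<rho> = sqrt (p2 / q2);
         \<eta> = \<sigma>x\<^sup>2 / \<sigma>y\<^sup>2
     in prob_space.expectation M (\<lambda>\<omega>. exp (s * \<gamma> \<omega>)) =
        1 / ((1 - 2 * \<eta> * \<gamma>bar * s / (real \<mu> * (1 + \<eta>) * (1 + \<kappa>))) powr (real \<mu> / 2)
             * (1 - 2 * \<gamma>bar * s / (real \<mu> * (1 + \<eta>) * (1 + \<kappa>))) powr (real \<mu> / 2))
        * (1 - 1 / m * (real \<mu> * \<kappa> * (\<rho>\<^sup>2 / (1 + \<rho>\<^sup>2)) * (1 + \<eta>) * \<gamma>bar * s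
                          / ((1 + \<eta>) * (1 + \<kappa>) * real \<mu> - 2 * \<eta> * \<gamma>bar * s)
                        + real \<mu> * \<kappa> * (1 / (1 + \<rho>\<^sup>2)) * (1 + \<eta>) * \<gamma>bar * s
                          / ((1 + \<eta>) * (1 + \<kappa>) * real \<mu> - 2 * \<gamma>bar * s))) powr (- m)"
proof -
  interpret fb_model M \<mu> \<sigma>x \<sigma>y m p q X Y \<xi>
    using assms by (intro fb_model.intro fb_model_axioms.intro) auto
  define c where "c = s * \<gamma>bar / (real \<mu> * (\<sigma>x\<^sup>2 + \<sigma>y\<^sup>2) + p2 + q2)"
  have "c \<le> 0"
    unfolding c_def using assms
    by (intro divide_nonpos_nonneg mult_nonpos_nonneg add_nonneg_nonneg sum_nonneg) auto
  have "expectation (\<lambda>\<omega>. exp (s * (\<gamma>bar * W \<omega> / expectation W))) = expectation (\<lambda>\<omega>. exp (c * W \<omega>))"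
    by (simp add: expectation_W c_def mult.assoc)
  also have "\<dots> = fb_mgf \<gamma>bar ((p2 + q2) / (real \<mu> * (\<sigma>x\<^sup>2 + \<sigma>y\<^sup>2))) \<mu> m (\<sigma>x\<^sup>2 / \<sigma>y\<^sup>2) (sqrt (p2 / q2)) s"
    unfolding expectation_exp_W[OF \<open>c \<le> 0\<close>] unfolding c_def
    using assms by (intro fb_mgf_eq[symmetric]) (auto intro: sum_nonneg)
  finally show ?thesis
    unfolding Let_def W_def fb_mgf_def .
qed

end
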